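(* Let $\mathcal{L}\in\mathscr{C}^\infty(\oplus^k\mathrm{T}Q\times\mathbb{R}^k)$ be a regular Lagrangian, fix an index $i$, and suppose that on a natural coordinate domain $\partial\mathcal{L}/\partial q^i=0$. Then $Y=\partial/\partial q^i$ satisfies $\mathscr{L}_Y\eta^\alpha_{\mathcal{L}}=0$ for all $\alpha$ and $\mathscr{L}_YE_{\mathcal{L}}=0$, and for every $k$-vector field $\mathbf{X}=(X_\alpha)$ solving the $k$-contact Lagrangian equations, $$\sum_\alpha\mathscr{L}_{X_\alpha}\Big(\frac{\partial\mathcal{L}}{\partial v^i_\alpha}\Big)=-\sum_\alpha(\mathscr{L}_{(\mathcal{R}_{\mathcal{L}})_\alpha}E_{\mathcal{L}})\frac{\partial\mathcal{L}}{\partial v^i_\alpha}=\sum_\alpha\frac{\partial\mathcal{L}}{\partial s^\alpha}\frac{\partial\mathcal{L}}{\partial v^i_\alpha}.$$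
   Context: Natural coordinates on $\oplus^k\mathrm{T}Q\times\mathbb{R}^k$ are $(q^i,v^i_\alpha,s^\alpha)$. $\mathcal{L}$ is regular if the matrix $\big(\partial^2\mathcal{L}/\partial v^i_\alpha\partial v^j_\beta\big)$ is everywhere invertible. The Lagrangian energy is $E_{\mathcal{L}}=v^i_\alpha\,\partial\mathcal{L}/\partial v^i_\alpha-\mathcal{L}$ and the contact forms are $\eta^\alpha_{\mathcal{L}}=\mathrm{d}s^\alpha-\frac{\partial\mathcal{L}}{\partial v^i_\alpha}\mathrm{d}q^i$; for regular $\mathcal{L}$ these define a $k$-contact structure, whose Reeb vector fields $(\mathcal{R}_{\mathcal{L}})_\alpha$ are the unique vector fields with $i((\mathcal{R}_{\mathcal{L}})_\alpha)\eta^\beta_{\mathcal{L}}=\delta^\beta_\alpha$, $i((\mathcal{R}_{\mathcal{L}})_\alpha)\mathrm{d}\eta^\beta_{\mathcal{L}}=0$. The $k$-contact Lagrangian equations for $\mathbf{X}=(X_1,\dots,X_k)$ are $\sum_\alpha i(X_\alpha)\mathrm{d}\eta^\alpha_{\mathcal{L}}=\mathrm{d}E_{\mathcal{L}}-\sum_\alpha(\mathscr{L}_{(\mathcal{R}_{\mathcal{L}})_\alpha}E_{\mathcal{L}})\eta^\alpha_{\mathcal{L}}$ and $\sum_\alpha i(X_\alpha)\eta^\alpha_{\mathcal{L}}=-E_{\mathcal{L}}$. *)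

theory Defs
  imports "HOL-Analysis.Analysis"
begin

text \<open>Natural coordinates on a coordinate domain of the bundle of k-velocities times R^k.
  A point is a triple (q, v, s) with q :: real^'n (the q^i), v :: real^'n^'k
  (v $ alpha $ i = v^i_alpha), s :: real^'k (the s^alpha).  Tangent vectors at a point
  are elements of the same vector space (components along d/dq^i, d/dv^i_alpha, d/ds^alpha).\<close>

type_synonym ('n, 'k) pt = "(real^'n) \<times> ((real^'n)^'k) \<times> (real^'k)"

definition qc :: "('n::finite, 'k::finite) pt \<Rightarrow> real^'n" where "qc x = fst x"
definition vc :: "('n::finite, 'k::finite) pt \<Rightarrow> (real^'n)^'k" where "vc x = fst (snd x)"
definition sc :: "('n::finite, 'k::finite) pt \<Rightarrow> real^'k" where "sc x = snd (snd x)"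

text \<open>Coordinate vector fields d/dq^i, d/dv^i_alpha, d/ds^alpha (constant in coordinates).\<close>
definition eq :: "'n \<Rightarrow> ('n::finite, 'k::finite) pt" where
  "eq i = (axis i 1, 0, 0)"
definition ev :: "'n \<Rightarrow> 'k \<Rightarrow> ('n::finite, 'k::finite) pt" where
  "ev i a = (0, axis a (axis i 1), 0)"
definition es :: "'k \<Rightarrow> ('n::finite, 'k::finite) pt" where
  "es a = (0, 0, axis a 1)"

definition dd :: "('a::real_normed_vector \<Rightarrow> 'b::real_normed_vector) \<Rightarrow> 'a \<Rightarrow> 'a \<Rightarrow> 'b" where
  "dd f x u = frechet_derivative f (at x) u"

fun Ck_on :: "nat \<Rightarrow> 'a::euclidean_space set \<Rightarrow> ('a \<Rightarrow> real) \<Rightarrow> bool" where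
  "Ck_on 0 U f = continuous_on U f"
| "Ck_on (Suc m) U f = (f differentiable_on U \<and> (\<forall>u. Ck_on m U (\<lambda>x. dd f x u)))"

definition Cinf_on :: "'a::euclidean_space set \<Rightarrow> ('a \<Rightarrow> real) \<Rightarrow> bool" where
  "Cinf_on U f = (\<forall>m. Ck_on m U f)"

definition Lq :: "(('n::finite, 'k::finite) pt \<Rightarrow> real) \<Rightarrow> 'n \<Rightarrow> ('n, 'k) pt \<Rightarrow> real" where
  "Lq L i x = dd L x (eq i)"
definition Lv :: "(('n::finite, 'k::finite) pt \<Rightarrow> real) \<Rightarrow> 'n \<Rightarrow> 'k \<Rightarrow> ('n, 'k) pt \<Rightarrow> real" where
  "Lv L i a x = dd L x (ev i a)"
definition Ls :: "(('n::finite, 'k::finite) pt \<Rightarrow> real) \<Rightarrow> 'k \<Rightarrow> ('n, 'k) pt \<Rightarrow> real" where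
  "Ls L a x = dd L x (es a)"

definition regular_on :: "('n::finite, 'k::finite) pt set \<Rightarrow> (('n, 'k) pt \<Rightarrow> real) \<Rightarrow> bool" where
  "regular_on U L = (\<forall>x\<in>U. invertible
      ((\<chi> a b. dd (Lv L (fst b) (snd b)) x (ev (fst a) (snd a))) :: real^('n \<times> 'k)^('n \<times> 'k)))"

definition energy :: "(('n::finite, 'k::finite) pt \<Rightarrow> real) \<Rightarrow> ('n, 'k) pt \<Rightarrow> real" where
  "energy L x = (\<Sum>a\<in>UNIV. \<Sum>i\<in>UNIV. (vc x $ a $ i) * Lv L i a x) - L x"

text \<open>Contact forms eta^alpha_L = ds^alpha - dL/dv^i_alpha dq^i, as (point, tangent vector) \<mapsto> value.\<close>
definition eta :: "(('n::finite, 'k::finite) pt \<Rightarrow> real) \<Rightarrow> 'k \<Rightarrow> ('n, 'k) pt \<Rightarrow> ('n, 'k) pt \<Rightarrow> real" where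
  "eta L a x w = sc w $ a - (\<Sum>i\<in>UNIV. Lv L i a x * (qc w $ i))"

text \<open>Exterior derivative of a 1-form theta (coordinate formula): 
  (d theta)_x(u,w) = D(theta(.)(w))_x(u) - D(theta(.)(u))_x(w).  Contraction i(u) d theta = d theta(u, -).\<close>
definition dform :: "('a::real_normed_vector \<Rightarrow> 'a \<Rightarrow> real) \<Rightarrow> 'a \<Rightarrow> 'a \<Rightarrow> 'a \<Rightarrow> real" where
  "dform \<theta> x u w = dd (\<lambda>y. \<theta> y w) x u - dd (\<lambda>y. \<theta> y u) x w"

definition lie_fun :: "('a::real_normed_vector \<Rightarrow> real) \<Rightarrow> ('a \<Rightarrow> 'a) \<Rightarrow> 'a \<Rightarrow> real" where
  "lie_fun f X x = dd f x (X x)"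

definition lie_form :: "('a::real_normed_vector \<Rightarrow> 'a \<Rightarrow> real) \<Rightarrow> ('a \<Rightarrow> 'a) \<Rightarrow> 'a \<Rightarrow> 'a \<Rightarrow> real" where
  "lie_form \<theta> Y x w = dd (\<lambda>y. \<theta> y w) x (Y x) + \<theta> x (dd Y x w)"

definition reeb :: "(('n::finite, 'k::finite) pt \<Rightarrow> real) \<Rightarrow> 'k \<Rightarrow> ('n, 'k) pt \<Rightarrow> ('n, 'k) pt" where
  "reeb L a x = (THE r. \<forall>b. eta L b x r = (if a = b then 1 else 0)
                         \<and> (\<forall>w. dform (eta L b) x r w = 0))"

definition solves_kcontact :: "('n::finite, 'k::finite) pt set \<Rightarrow> (('n, 'k) pt \<Rightarrow> real)
    \<Rightarrow> ('k \<Rightarrow> ('n, 'k) pt \<Rightarrow> ('n, 'k) pt) \<Rightarrow> bool" where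
  "solves_kcontact U L X = (\<forall>x\<in>U.
      (\<forall>w. (\<Sum>a\<in>UNIV. dform (eta L a) x (X a x) w)
           = dd (energy L) x w - (\<Sum>a\<in>UNIV. lie_fun (energy L) (reeb L a) x * eta L a x w))
    \<and> (\<Sum>a\<in>UNIV. eta L a x (X a x)) = - energy L x)"

end

theory Submission
  imports Defs
begin

text \<open>If q^i is cyclic, L is locally invariant under translation in q^i, hence so are its
  partial derivatives: the momenta dL/dv^j_alpha do not depend on q^i, which makes the contact
  forms and the energy q^i-invariant. Contracting the first k-contact equation with d/dq^i then
  leaves the derivatives of the momenta dL/dv^i_alpha along the X_alpha on one side and the Reeb
  terms on the other. Regularity determines the Reeb fields: R_alpha has no q-component,
  s-component e_alpha, and all momenta are constant along it, so R_alpha E_L = -dL/ds^alpha.\<close>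

lemma dd_eqI: "(f has_derivative f') (at x) \<Longrightarrow> dd f x = f'"
  unfolding dd_def by (rule frechet_derivative_at[symmetric])

lemma has_derivative_dd: "f differentiable at x \<Longrightarrow> (f has_derivative dd f x) (at x)"
  unfolding dd_def using frechet_derivative_works by blast

lemma dd_const: "dd (\<lambda>_. c) x = (\<lambda>_. 0)"
  by (rule dd_eqI) simp

lemma has_derivative_along_line:
  assumes "(f has_derivative f') (at (z + t *\<^sub>R e))"
  shows "((\<lambda>s. f (z + s *\<^sub>R e)) has_derivative (\<lambda>h. h *\<^sub>R f' e)) (at t)"
proof -
  have "((\<lambda>s. z + s *\<^sub>R e) has_derivative (\<lambda>h. h *\<^sub>R e)) (at t)"
    by (auto intro!: derivative_eq_intros)
  from diff_chain_at[OF this assms] show ?thesis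
    using linear_scale[OF has_derivative_linear[OF assms]] by (simp add: o_def)
qed

lemma constant_along_segment:
  fixes f :: "'a::real_normed_vector \<Rightarrow> 'b::real_normed_vector"
  assumes seg: "closed_segment z (z + t *\<^sub>R e) \<subseteq> U"
    and f: "\<forall>y\<in>U. f differentiable at y \<and> dd f y e = 0"
  shows "f (z + t *\<^sub>R e) = f z"
proof -
  have line_in_U: "z + s *\<^sub>R e \<in> U" if s: "s \<in> closed_segment 0 t" for s
  proof -
    obtain u where u: "0 \<le> u" "u \<le> 1" "s = u * t"
      using s unfolding closed_segment_def by force
    then have "z + s *\<^sub>R e = (1 - u) *\<^sub>R z + u *\<^sub>R (z + t *\<^sub>R e)"
      by (simp add: algebra_simps)
    then show ?thesis using u seg by (auto simp: closed_segment_def)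
  qed
  have "((\<lambda>s. f (z + s *\<^sub>R e)) has_derivative (\<lambda>h. 0)) (at s within closed_segment 0 t)"
    if "s \<in> closed_segment 0 t" for s
    using has_derivative_along_line[OF has_derivative_dd, of f z s e] f line_in_U[OF that]
    by (auto intro: has_derivative_at_withinI)
  then show ?thesis
    using has_derivative_zero_unique[of "closed_segment 0 t" "\<lambda>s. f (z + s *\<^sub>R e)" t 0] by simp
qed

lemma eventually_dd_translate_eq:
  fixes f :: "'a::real_normed_vector \<Rightarrow> 'b::real_normed_vector"
  assumes "open U" "x \<in> U" and f: "\<forall>y\<in>U. f differentiable at y \<and> dd f y e = 0"
  shows "\<forall>\<^sub>F t in nhds 0. dd f (x + t *\<^sub>R e) = dd f x"
proof -
  obtain r where r: "r > 0" "ball x r \<subseteq> U" using assms(1,2) open_contains_ball by blast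
  have lim: "((\<lambda>t. norm (t *\<^sub>R e)) \<longlongrightarrow> norm (0 *\<^sub>R e)) (nhds 0)"
    by (intro tendsto_intros) (simp add: filterlim_ident)
  have "\<forall>\<^sub>F t in nhds 0. norm (t *\<^sub>R e) < r / 2"
    using order_tendstoD(2)[OF lim, of "r / 2"] r(1) by simp
  then show ?thesis
  proof eventually_elim
    case (elim t)
    have shift_in_ball: "z + t *\<^sub>R e \<in> ball x r" if "z \<in> ball x (r / 2)" for z
      using that elim norm_triangle_ineq[of "z - x" "t *\<^sub>R e"]
      by (auto simp: dist_norm norm_minus_commute algebra_simps)
    have local_eq: "f (z + t *\<^sub>R e) = f z" if "z \<in> ball x (r / 2)" for z
    proof (rule constant_along_segment[OF _ f])
      have "z \<in> ball x r" using that subset_ball[of "r / 2" r x] r(1) by auto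
      then show "closed_segment z (z + t *\<^sub>R e) \<subseteq> U"
        using closed_segment_subset[OF _ shift_in_ball[OF that] convex_ball] r(2) by blast
    qed
    have xt: "x + t *\<^sub>R e \<in> U" using shift_in_ball[of x] r by auto
    have shift: "((\<lambda>z. z + t *\<^sub>R e) has_derivative id) (at x)"
      by (auto intro!: derivative_eq_intros simp: id_def)
    have "(f has_derivative dd f (x + t *\<^sub>R e)) (at (x + t *\<^sub>R e))"
      using f xt has_derivative_dd by blast
    from diff_chain_at[OF shift this]
    have shifted: "((\<lambda>z. f (z + t *\<^sub>R e)) has_derivative dd f (x + t *\<^sub>R e)) (at x)"
      by (simp add: o_def)
    have "frechet_derivative (\<lambda>z. f (z + t *\<^sub>R e)) (at x) = dd f x"
      unfolding dd_def
      by (rule frechet_derivative_transform_within_open[of _ _ "ball x (r / 2)"])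
         (use shifted r(1) local_eq in \<open>auto simp: differentiable_def\<close>)
    with shifted show ?case by (simp add: dd_def frechet_derivative_at[symmetric])
  qed
qed

text \<open>Symmetry of mixed partials in the special case where one of them vanishes identically:
  then f is locally invariant under translation along e, hence so is its derivative.\<close>

lemma dd_dd_eq_zero:
  fixes f :: "'a::real_normed_vector \<Rightarrow> 'b::real_normed_vector"
  assumes "open U" "x \<in> U" and f: "\<forall>y\<in>U. f differentiable at y \<and> dd f y e = 0"
    and "(\<lambda>y. dd f y u) differentiable at x"
  shows "dd (\<lambda>y. dd f y u) x e = 0"
proof -
  let ?g = "\<lambda>s. dd f (x + s *\<^sub>R e) u"
  have "((\<lambda>y. dd f y u) has_derivative dd (\<lambda>y. dd f y u) x) (at (x + 0 *\<^sub>R e))"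
    using has_derivative_dd[OF assms(4)] by simp
  from has_derivative_along_line[OF this]
  have "(?g has_derivative (\<lambda>h. h *\<^sub>R dd (\<lambda>y. dd f y u) x e)) (at 0)" .
  moreover have "(?g has_derivative (\<lambda>h. 0)) (at 0)"
  proof (rule has_derivative_transform_eventually[OF has_derivative_const])
    show "\<forall>\<^sub>F s in at 0. dd f x u = ?g s"
      using eventually_dd_translate_eq[OF assms(1-3)]
      by (auto simp: eventually_at_filter elim: eventually_mono)
  qed auto
  ultimately have "(\<lambda>h. h *\<^sub>R dd (\<lambda>y. dd f y u) x e) = (\<lambda>h::real. 0)"
    by (rule has_derivative_unique)
  then show ?thesis by (metis scaleR_one)
qed

lemma Cinf_on_differentiable_at:
  assumes "open U" "Cinf_on U f" "x \<in> U"
  shows "f differentiable at x" "(\<lambda>y. dd f y u) differentiable at x"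
proof -
  have "Ck_on 2 U f" using assms(2) unfolding Cinf_on_def by blast
  then show "f differentiable at x" "(\<lambda>y. dd f y u) differentiable at x"
    using assms(1,3) by (auto simp: numeral_2_eq_2 differentiable_on_eq_differentiable_at)
qed

lemma invertible_matrix_vector_eq_0:
  fixes A :: "'a::field^'n^'n"
  assumes "invertible A" "A *v z = 0"
  shows "z = 0"
  using assms matrix_left_invertible_ker invertible_left_inverse by blast

lemma invertible_vector_matrix_eq_0:
  fixes A :: "real^'n^'n"
  assumes "invertible A" "y v* A = 0"
  shows "y = 0"
  using assms invertible_matrix_vector_eq_0[OF transpose_invertible] by simp

lemma invertible_vector_matrix_solvable:
  fixes A :: "'a::field^'n^'n"
  assumes "invertible A"
  obtains y where "y v* A = c"
proof -
  obtain B where "B ** A = mat 1" using assms invertible_def by blast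
  then have "(c v* B) v* A = c" by (simp add: vector_matrix_mul_assoc)
  then show thesis by (rule that)
qed

lemma sum_UNIV_prod: "(\<Sum>p\<in>UNIV. f p) = (\<Sum>a\<in>UNIV. \<Sum>b\<in>UNIV. f (a, b))"
  by (simp add: sum.cartesian_product UNIV_Times_UNIV[symmetric] del: UNIV_Times_UNIV)

lemma sum_axis_mult [simp]:
  "(\<Sum>j\<in>UNIV. f j * axis i (1::'a::comm_ring_1) $ j) = f i"
  "(\<Sum>j\<in>UNIV. axis i (1::'a) $ j * f j) = f i"
  by (simp_all add: axis_def if_distrib[of "\<lambda>v. _ * v"] if_distrib[of "\<lambda>v. v * _"] sum.delta
      cong: if_cong)

lemma pt_coords [simp]:
  "qc (eq i) = axis i 1" "vc (eq i) = 0" "sc (eq i) = 0"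
  "qc (ev i a) = 0" "vc (ev i a) = axis a (axis i 1)" "sc (ev i a) = 0"
  "qc (es a) = 0" "vc (es a) = 0" "sc (es a) = axis a 1"
  "qc 0 = 0" "vc 0 = 0" "sc 0 = 0"
  "qc (w + w') = qc w + qc w'" "vc (w + w') = vc w + vc w'" "sc (w + w') = sc w + sc w'"
  "qc (w - w') = qc w - qc w'" "vc (w - w') = vc w - vc w'" "sc (w - w') = sc w - sc w'"
  "qc (c *\<^sub>R w) = c *\<^sub>R qc w" "vc (c *\<^sub>R w) = c *\<^sub>R vc w" "sc (c *\<^sub>R w) = c *\<^sub>R sc w"
  "qc (sum g A) = (\<Sum>y\<in>A. qc (g y))" "vc (sum g A) = (\<Sum>y\<in>A. vc (g y))" "sc (sum g A) = (\<Sum>y\<in>A. sc (g y))"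
  by (auto simp: qc_def vc_def sc_def eq_def ev_def es_def zero_prod_def fst_sum snd_sum)

lemma pt_eqI: "qc w = qc w' \<Longrightarrow> vc w = vc w' \<Longrightarrow> sc w = sc w' \<Longrightarrow> w = w'"
  by (simp add: qc_def vc_def sc_def prod_eq_iff)

lemma pt_coordinate_expansion:
  "(w :: ('n::finite, 'k::finite) pt) = (\<Sum>j\<in>UNIV. (qc w $ j) *\<^sub>R eq j)
     + (\<Sum>c\<in>UNIV. \<Sum>j\<in>UNIV. (vc w $ c $ j) *\<^sub>R ev j c) + (\<Sum>c\<in>UNIV. (sc w $ c) *\<^sub>R es c)"
proof -
  have sum_if_const: "(\<Sum>y\<in>A. if P then g y else 0) = (if P then sum g A else (0::real))" for P g and A :: "'n set"
    by simp
  show ?thesis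
    by (rule pt_eqI)
       (simp_all add: vec_eq_iff sum_component axis_def if_distrib[of "\<lambda>v. v $ _"]
         if_distrib[of "\<lambda>v. _ * v"] sum_if_const sum.delta sum.delta' cong: if_cong)
qed

lemma linear_coordinate_expansion:
  assumes "linear (D :: ('n::finite, 'k::finite) pt \<Rightarrow> real)"
  shows "D w = (\<Sum>j\<in>UNIV. qc w $ j * D (eq j))
     + (\<Sum>c\<in>UNIV. \<Sum>j\<in>UNIV. vc w $ c $ j * D (ev j c)) + (\<Sum>c\<in>UNIV. sc w $ c * D (es c))"
  by (subst pt_coordinate_expansion[of w]) (simp add: assms linear_add linear_sum linear_scale)

lemma Lv_eq: "Lv L j b = (\<lambda>y. dd L y (ev j b))"
  by (simp add: fun_eq_iff Lv_def)

definition velocity_hessian ::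
    "(('n::finite, 'k::finite) pt \<Rightarrow> real) \<Rightarrow> ('n, 'k) pt \<Rightarrow> real^('n \<times> 'k)^('n \<times> 'k)" where
  "velocity_hessian L x = (\<chi> p q. dd (Lv L (fst q) (snd q)) x (ev (fst p) (snd p)))"

definition velocity_vector :: "('n::finite, 'k::finite) pt \<Rightarrow> real^('n \<times> 'k)" where
  "velocity_vector h = (\<chi> p. vc h $ snd p $ fst p)"

lemma regular_on_invertible: "regular_on U L \<Longrightarrow> x \<in> U \<Longrightarrow> invertible (velocity_hessian L x)"
  by (simp add: regular_on_def velocity_hessian_def)

context
  fixes L :: "('n::finite, 'k::finite) pt \<Rightarrow> real" and U x
  assumes U: "open U" and L: "Cinf_on U L" and x: "x \<in> U"
begin

lemma has_derivative_L: "(L has_derivative dd L x) (at x)"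
  by (rule has_derivative_dd, rule Cinf_on_differentiable_at[OF U L x])

lemma has_derivative_Lv: "(Lv L j b has_derivative dd (Lv L j b) x) (at x)"
  unfolding Lv_eq by (rule has_derivative_dd, rule Cinf_on_differentiable_at(2)[OF U L x])

lemma linear_dd_L: "linear (dd L x)"
  by (rule has_derivative_linear[OF has_derivative_L])

lemma linear_dd_Lv: "linear (dd (Lv L j b) x)"
  by (rule has_derivative_linear[OF has_derivative_Lv])

lemma dd_eta: "dd (\<lambda>y. eta L b y w) x = (\<lambda>h. - (\<Sum>j\<in>UNIV. dd (Lv L j b) x h * qc w $ j))"
  unfolding eta_def by (rule dd_eqI) (auto intro!: derivative_eq_intros has_derivative_Lv)

lemma dform_eta:
  "dform (eta L b) x r w
     = (\<Sum>j\<in>UNIV. dd (Lv L j b) x w * qc r $ j) - (\<Sum>j\<in>UNIV. dd (Lv L j b) x r * qc w $ j)"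
  unfolding dform_def dd_eta by simp

lemma dd_energy:
  "dd (energy L) x = (\<lambda>h. (\<Sum>a\<in>UNIV. \<Sum>j\<in>UNIV.
       vc h $ a $ j * Lv L j a x + vc x $ a $ j * dd (Lv L j a) x h) - dd L x h)"
proof (rule dd_eqI)
  have vc_has: "((\<lambda>y. vc y $ a $ j) has_derivative (\<lambda>h. vc h $ a $ j)) (at x)" for a j
    unfolding vc_def
    by (auto intro!: derivative_eq_intros bounded_linear.has_derivative[OF bounded_linear_vec_nth])
  show "(energy L has_derivative (\<lambda>h. (\<Sum>a\<in>UNIV. \<Sum>j\<in>UNIV.
          vc h $ a $ j * Lv L j a x + vc x $ a $ j * dd (Lv L j a) x h) - dd L x h)) (at x)"
    unfolding energy_def[abs_def]
    by (auto intro!: derivative_eq_intros has_derivative_Lv vc_has has_derivative_L simp: algebra_simps)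
qed

lemma dd_Lv_vertical:
  assumes "qc h = 0"
  shows "dd (Lv L j b) x h
    = (velocity_vector h v* velocity_hessian L x) $ (j, b) + (\<Sum>c\<in>UNIV. sc h $ c * dd (Lv L j b) x (es c))"
  by (subst linear_coordinate_expansion[OF linear_dd_Lv])
     (simp add: assms vector_matrix_mult_def velocity_vector_def velocity_hessian_def sum_UNIV_prod
       sum.swap[of _ "UNIV::'n set"])

end

definition is_reeb :: "(('n::finite, 'k::finite) pt \<Rightarrow> real) \<Rightarrow> 'k \<Rightarrow> ('n, 'k) pt \<Rightarrow> ('n, 'k) pt \<Rightarrow> bool" where
  "is_reeb L a x r \<longleftrightarrow> (\<forall>b. eta L b x r = (if a = b then 1 else 0) \<and> (\<forall>w. dform (eta L b) x r w = 0))"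

lemma reeb_eq_The_is_reeb: "reeb L a x = (THE r. is_reeb L a x r)"
  by (simp add: reeb_def is_reeb_def)

context
  fixes L :: "('n::finite, 'k::finite) pt \<Rightarrow> real" and U x
  assumes U: "open U" and L: "Cinf_on U L" and x: "x \<in> U"
    and R: "invertible (velocity_hessian L x)"
begin

text \<open>The conditions i(r) d eta^a = 0 tested on the d/dv directions say that the velocity
  Hessian annihilates the q-part of r.\<close>

lemma is_reeb_qc:
  assumes "is_reeb L a x r"
  shows "qc r = 0"
proof -
  define z where "z = (\<chi> p. if snd p = a then qc r $ fst p else 0)"
  have "dform (eta L a) x r (ev l c) = 0" for l c
    using assms unfolding is_reeb_def by blast
  then have "velocity_hessian L x *v z = 0"
    by (simp add: dform_eta[OF U L x] vec_eq_iff matrix_vector_mult_def velocity_hessian_def z_def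
        sum_UNIV_prod if_distrib sum.delta cong: if_cong)
  then have "z = 0" by (rule invertible_matrix_vector_eq_0[OF R])
  then show ?thesis by (simp add: vec_eq_iff z_def) (metis fst_conv)
qed

lemma is_reeb_iff:
  "is_reeb L a x r \<longleftrightarrow> qc r = 0 \<and> sc r = axis a 1 \<and> (\<forall>j b. dd (Lv L j b) x r = 0)"
proof
  assume reeb: "is_reeb L a x r"
  note qc_r = is_reeb_qc[OF reeb]
  have "eta L b x r = (if a = b then 1 else 0)" "dform (eta L b) x r (eq j) = 0" for b j
    using reeb unfolding is_reeb_def by blast+
  then show "qc r = 0 \<and> sc r = axis a 1 \<and> (\<forall>j b. dd (Lv L j b) x r = 0)"
    by (simp add: qc_r dform_eta[OF U L x] eta_def) (simp add: vec_eq_iff axis_def)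
next
  assume "qc r = 0 \<and> sc r = axis a 1 \<and> (\<forall>j b. dd (Lv L j b) x r = 0)"
  then show "is_reeb L a x r"
    by (simp add: is_reeb_def dform_eta[OF U L x] eta_def axis_def)
qed

lemma is_reeb_unique:
  assumes "is_reeb L a x r" "is_reeb L a x r'"
  shows "r = r'"
proof -
  have d: "qc (r - r') = 0" "sc (r - r') = 0" "dd (Lv L j b) x (r - r') = 0" for j b
    using assms linear_diff[OF linear_dd_Lv[OF U L x]] by (simp_all add: is_reeb_iff)
  then have "velocity_vector (r - r') v* velocity_hessian L x = 0"
    using d dd_Lv_vertical[OF U L x d(1)] by (simp add: vec_eq_iff)
  then have "velocity_vector (r - r') = 0" by (rule invertible_vector_matrix_eq_0[OF R])
  then have "vc (r - r') = 0" by (simp add: velocity_vector_def vec_eq_iff)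
  with d show ?thesis by (simp add: pt_eqI)
qed

lemma is_reeb_exists: "\<exists>r. is_reeb L a x r"
proof -
  obtain y where y: "y v* velocity_hessian L x = - (\<chi> p. dd (Lv L (fst p) (snd p)) x (es a))"
    using invertible_vector_matrix_solvable[OF R] by blast
  define r :: "('n, 'k) pt" where "r = (0, \<chi> c l. y $ (l, c), axis a 1)"
  have r: "qc r = 0" "sc r = axis a 1" "velocity_vector r = y"
    by (simp_all add: r_def qc_def sc_def vc_def velocity_vector_def)
  have "dd (Lv L j b) x r = 0" for j b
    using y by (simp add: dd_Lv_vertical[OF U L x r(1)] r vec_eq_iff)
  with r have "is_reeb L a x r" by (simp add: is_reeb_iff)
  then show ?thesis ..
qed

lemma is_reeb_reeb: "is_reeb L a x (reeb L a x)"
  unfolding reeb_eq_The_is_reeb using is_reeb_exists is_reeb_unique by (blast intro: theI)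

lemma dd_energy_reeb: "dd (energy L) x (reeb L a x) = - Ls L a x"
proof -
  define r where "r = reeb L a x"
  have r: "qc r = 0" "sc r = axis a 1" "\<forall>j b. dd (Lv L j b) x r = 0"
    using is_reeb_reeb[of a] unfolding r_def is_reeb_iff by auto
  have "dd L x r = (\<Sum>c\<in>UNIV. \<Sum>j\<in>UNIV. vc r $ c $ j * Lv L j c x) + Ls L a x"
    by (subst linear_coordinate_expansion[OF linear_dd_L[OF U L x]])
       (simp add: r Lv_def Ls_def)
  then show ?thesis by (simp add: r_def[symmetric] r(3) dd_energy[OF U L x] sum.distrib)
qed

end

context
  fixes L :: "('n::finite, 'k::finite) pt \<Rightarrow> real" and U i
  assumes U: "open U" and L: "Cinf_on U L" and cyclic: "\<forall>y\<in>U. Lq L i y = 0"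
begin

lemma dd_Lv_cyclic: "x \<in> U \<Longrightarrow> dd (Lv L j a) x (eq i) = 0"
  unfolding Lv_eq
  using cyclic Cinf_on_differentiable_at[OF U L]
  by (intro dd_dd_eq_zero[OF U]) (auto simp: Lq_def)

lemma lie_form_eta_cyclic: "x \<in> U \<Longrightarrow> lie_form (eta L a) (\<lambda>_. eq i) x w = 0"
  by (simp add: lie_form_def dd_eta[OF U L] dd_Lv_cyclic dd_const) (simp add: eta_def)

lemma lie_fun_energy_cyclic: "x \<in> U \<Longrightarrow> lie_fun (energy L) (\<lambda>_. eq i) x = 0"
  using cyclic by (simp add: lie_fun_def dd_energy[OF U L] dd_Lv_cyclic Lq_def)

lemma kcontact_dissipation_cyclic:
  assumes "solves_kcontact U L X" "x \<in> U"
  shows "(\<Sum>a\<in>UNIV. lie_fun (Lv L i a) (X a) x)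
           = - (\<Sum>a\<in>UNIV. lie_fun (energy L) (reeb L a) x * Lv L i a x)"
proof -
  have "(\<Sum>a\<in>UNIV. dform (eta L a) x (X a x) (eq i))
      = dd (energy L) x (eq i) - (\<Sum>a\<in>UNIV. lie_fun (energy L) (reeb L a) x * eta L a x (eq i))"
    using assms unfolding solves_kcontact_def by blast
  moreover have "dform (eta L a) x (X a x) (eq i) = - lie_fun (Lv L i a) (X a) x" for a
    using assms(2) by (simp add: dform_eta[OF U L] dd_Lv_cyclic lie_fun_def)
  moreover have "eta L a x (eq i) = - Lv L i a x" for a
    by (simp add: eta_def)
  moreover have "dd (energy L) x (eq i) = 0"
    using lie_fun_energy_cyclic[OF assms(2)] by (simp add: lie_fun_def)
  ultimately show ?thesis by (simp add: sum_negf)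
qed

end

theorem mainTheorem18:
  fixes L :: "('n::finite, 'k::finite) pt \<Rightarrow> real"
    and U :: "('n, 'k) pt set"
    and i :: 'n
  assumes "open U"
    and "Cinf_on U L"
    and "regular_on U L"
    and "\<forall>x\<in>U. Lq L i x = 0"
  shows "(\<forall>a. \<forall>x\<in>U. \<forall>w. lie_form (eta L a) (\<lambda>_. eq i) x w = 0)
       \<and> (\<forall>x\<in>U. lie_fun (energy L) (\<lambda>_. eq i) x = 0)
       \<and> (\<forall>X. solves_kcontact U L X \<longrightarrow>
            (\<forall>x\<in>U. (\<Sum>a\<in>UNIV. lie_fun (Lv L i a) (X a) x)
                     = - (\<Sum>a\<in>UNIV. lie_fun (energy L) (reeb L a) x * Lv L i a x)
                  \<and> - (\<Sum>a\<in>UNIV. lie_fun (energy L) (reeb L a) x * Lv L i a x)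
                     = (\<Sum>a\<in>UNIV. Ls L a x * Lv L i a x)))"
proof -
  have reeb: "- (\<Sum>a\<in>UNIV. lie_fun (energy L) (reeb L a) x * Lv L i a x)
      = (\<Sum>a\<in>UNIV. Ls L a x * Lv L i a x)" if "x \<in> U" for x
    using dd_energy_reeb[OF assms(1,2) that regular_on_invertible[OF assms(3) that]]
    by (simp add: lie_fun_def sum_negf)
  show ?thesis
    using lie_form_eta_cyclic[OF assms(1,2,4)] lie_fun_energy_cyclic[OF assms(1,2,4)]
      kcontact_dissipation_cyclic[OF assms(1,2,4)] reeb
    by blast
qed

end
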